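(* Let $X$ be a finite-dimensional real Banach space such that each $x\in S_X$ is $\varepsilon_x$-smooth for some $\varepsilon_x\in[0,2)$ (depending on $x$). Then $X$ is approximately smooth, i.e. there exists $\varepsilon\in[0,2)$ such that every $x\in S_X$ is $\varepsilon$-smooth.
   Context: For $x\in X\setminus\{\theta\}$, $J(x)=\{f\in S_{X^*}: f(x)=\|x\|\}$ (supporting functionals), and $x$ is $\varepsilon$-smooth if $\operatorname{diam}J(x)=\sup_{f,g\in J(x)}\|f-g\|\le\varepsilon$. $S_X$ is the unit sphere of $X$. *)

theory Defs
  imports "HOL-Analysis.Analysis"
begin

definition supp_funcs :: "'a::real_normed_vector \<Rightarrow> ('a \<Rightarrow>\<^sub>L real) set" where
  "supp_funcs x = {f. norm f = 1 \<and> blinfun_apply f x = norm x}"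

definition eps_smooth :: "real \<Rightarrow> 'a::real_normed_vector \<Rightarrow> bool" where
  "eps_smooth e x \<longleftrightarrow> x \<noteq> 0 \<and> diameter (supp_funcs x) \<le> e"

end

theory Submission
  imports Defs
begin

text \<open>A finite-dimensional normed space and its dual have compact unit spheres (coordinates
  with respect to a basis are bounded by the norm). Hence the triples \<open>(x, f, g)\<close> with
  \<open>x \<in> S\<^sub>X\<close> and \<open>f, g \<in> J(x)\<close> form a compact set, on which \<open>\<parallel>f - g\<parallel>\<close> attains its maximum
  at some \<open>(x\<^sub>0, f\<^sub>0, g\<^sub>0)\<close>. Then \<open>diam J(x) \<le> \<parallel>f\<^sub>0 - g\<^sub>0\<parallel> \<le> diam J(x\<^sub>0) \<le> \<epsilon>\<^sub>x\<^sub>0 < 2\<close>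
  for every \<open>x \<in> S\<^sub>X\<close>.\<close>

lemma compact_PiE_UNIV:
  fixes K :: "'b::topological_space set"
  assumes "compact K"
  shows "compact (Pi\<^sub>E (UNIV :: 'i set) (\<lambda>_. K))"
proof -
  have "compactin (product_topology (\<lambda>_. euclidean) UNIV) (Pi\<^sub>E (UNIV :: 'i set) (\<lambda>_. K))"
    using assms by (simp add: compactin_PiE)
  then show ?thesis
    by (simp add: euclidean_product_topology)
qed

lemma independent_norm_bounded_below_on_l1_sphere:
  fixes B :: "'a::real_normed_vector set"
  assumes "finite B" "independent B"
  obtains m where "m > 0"
    "\<And>u. u \<in> Pi\<^sub>E UNIV (\<lambda>_. {-1..1}) \<Longrightarrow> (\<Sum>v\<in>B. \<bar>u v\<bar>) = 1
      \<Longrightarrow> m \<le> norm (\<Sum>v\<in>B. u v *\<^sub>R v)"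
proof -
  define N where "N = (\<lambda>u. norm (\<Sum>v\<in>B. u v *\<^sub>R v))"
  define S where "S = Pi\<^sub>E UNIV (\<lambda>_. {-1..1}) \<inter> {u. (\<Sum>v\<in>B. \<bar>u v\<bar>) = (1::real)}"
  show ?thesis
  proof (cases "S = {}")
    case True
    then show ?thesis
      using that[of 1] by (auto simp: S_def)
  next
    case False
    have "compact S"
      unfolding S_def
      by (intro compact_Int_closed compact_PiE_UNIV closed_Collect_eq continuous_intros) auto
    moreover have "continuous_on S N"
      unfolding N_def
      by (intro continuous_intros
          continuous_on_subset[OF continuous_on_product_coordinates subset_UNIV])
    ultimately obtain w0 where w0: "w0 \<in> S" "\<And>w. w \<in> S \<Longrightarrow> N w0 \<le> N w"
      using continuous_attains_inf[OF _ False] by metis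
    have "\<exists>v\<in>B. w0 v \<noteq> 0"
    proof (rule ccontr)
      assume "\<not> ?thesis"
      then have "(\<Sum>v\<in>B. \<bar>w0 v\<bar>) = 0"
        by simp
      with w0(1) show False
        by (simp add: S_def)
    qed
    then have "(\<Sum>v\<in>B. w0 v *\<^sub>R v) \<noteq> 0"
      using assms dependent_finite by blast
    then show ?thesis
      using that[of "N w0"] w0(2) by (simp add: N_def S_def)
  qed
qed

lemma independent_coefficients_le_norm:
  fixes B :: "'a::real_normed_vector set"
  assumes "finite B" "independent B"
  obtains m where "m > 0" "\<And>u. m * (\<Sum>v\<in>B. \<bar>u v\<bar>) \<le> norm (\<Sum>v\<in>B. u v *\<^sub>R v)"
proof -
  obtain m where "m > 0" and m: "\<And>u. u \<in> Pi\<^sub>E UNIV (\<lambda>_. {-1..1}) \<Longrightarrow> (\<Sum>v\<in>B. \<bar>u v\<bar>) = 1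
      \<Longrightarrow> m \<le> norm (\<Sum>v\<in>B. u v *\<^sub>R v)"
    using independent_norm_bounded_below_on_l1_sphere assms by blast
  have "m * (\<Sum>v\<in>B. \<bar>u v\<bar>) \<le> norm (\<Sum>v\<in>B. u v *\<^sub>R v)" for u
  proof (cases "(\<Sum>v\<in>B. \<bar>u v\<bar>) = 0")
    case False
    define s where "s = (\<Sum>v\<in>B. \<bar>u v\<bar>)"
    have "s > 0"
      using False by (simp add: s_def order_less_le sum_nonneg)
    define w where "w v = (if v \<in> B then u v / s else 0)" for v
    have "\<bar>u v\<bar> \<le> s" if "v \<in> B" for v
      unfolding s_def using that assms(1) by (intro member_le_sum) auto
    then have "w \<in> Pi\<^sub>E UNIV (\<lambda>_. {-1..1})"
      using \<open>s > 0\<close> by (auto simp: w_def abs_le_iff divide_le_eq le_divide_eq minus_le_iff)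
    moreover have "(\<Sum>v\<in>B. \<bar>w v\<bar>) = 1"
      using \<open>s > 0\<close> by (simp add: w_def s_def sum_divide_distrib[symmetric])
    ultimately have "m \<le> norm (\<Sum>v\<in>B. w v *\<^sub>R v)"
      by (rule m)
    also have "(\<Sum>v\<in>B. w v *\<^sub>R v) = (1 / s) *\<^sub>R (\<Sum>v\<in>B. u v *\<^sub>R v)"
      by (simp add: w_def scaleR_sum_right)
    finally show ?thesis
      using \<open>s > 0\<close> by (simp add: s_def[symmetric] le_divide_eq mult.commute)
  qed simp
  then show ?thesis
    using that \<open>m > 0\<close> by blast
qed

lemma finite_span_basis_coordinates_le_norm:
  fixes V :: "'a::real_normed_vector set"
  assumes "finite V" "span V = UNIV"
  obtains B :: "'a set" and C :: real where "finite B" "independent B" "span B = UNIV" "C \<ge> 0"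
    "\<And>x v. \<bar>representation B x v\<bar> \<le> C * norm x"
proof -
  obtain B where B: "B \<subseteq> V" "independent B" "V \<subseteq> span B"
    using maximal_independent_subset by blast
  have "finite B"
    using B(1) assms(1) finite_subset by blast
  have "span B = UNIV"
    using assms(2) span_mono[OF B(3)] by (simp add: span_span top_unique)
  obtain m where "m > 0" and m: "\<And>u. m * (\<Sum>v\<in>B. \<bar>u v\<bar>) \<le> norm (\<Sum>v\<in>B. u v *\<^sub>R v)"
    using independent_coefficients_le_norm \<open>finite B\<close> B(2) by blast
  have "\<bar>representation B x v\<bar> \<le> (1 / m) * norm x" for x v
  proof (cases "v \<in> B")
    case True
    then have "m * \<bar>representation B x v\<bar> \<le> m * (\<Sum>v\<in>B. \<bar>representation B x v\<bar>)"
      using \<open>m > 0\<close> \<open>finite B\<close> by (intro mult_left_mono member_le_sum) auto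
    also have "\<dots> \<le> norm x"
      using m[of "representation B x"] B(2) \<open>finite B\<close> \<open>span B = UNIV\<close>
      by (simp add: sum_representation_eq)
    finally show ?thesis
      using \<open>m > 0\<close> by (simp add: le_divide_eq mult.commute)
  next
    case False
    then have "representation B x v = 0"
      using representation_ne_zero by blast
    then show ?thesis
      using \<open>m > 0\<close> by simp
  qed
  moreover have "1 / m \<ge> 0"
    using \<open>m > 0\<close> by simp
  ultimately show ?thesis
    using that \<open>finite B\<close> B(2) \<open>span B = UNIV\<close> by blast
qed

lemma finite_span_bounded_closed_imp_compact:
  fixes V S :: "'a::real_normed_vector set"
  assumes "finite V" "span V = UNIV" "bounded S" "closed S"
  shows "compact S"
proof -
  obtain B :: "'a set" and C :: real
    where B: "finite B" "independent B" "span B = UNIV" and "C \<ge> 0"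
    and coord: "\<And>x v. \<bar>representation B x v\<bar> \<le> C * norm x"
    using finite_span_basis_coordinates_le_norm assms(1,2) by blast
  obtain r where r: "\<And>x. x \<in> S \<Longrightarrow> norm x \<le> r"
    using assms(3) bounded_iff by blast
  define F where "F u = (\<Sum>v\<in>B. u v *\<^sub>R v)" for u :: "'a \<Rightarrow> real"
  define Q where "Q = Pi\<^sub>E UNIV (\<lambda>_::'a. {-(C * r)..C * r})"
  have "S \<subseteq> F ` Q"
  proof
    fix x assume "x \<in> S"
    have "\<bar>representation B x v\<bar> \<le> C * r" for v
      using coord[of x v] mult_left_mono[OF r[OF \<open>x \<in> S\<close>] \<open>C \<ge> 0\<close>] by linarith
    then have "representation B x \<in> Q"
      by (auto simp: Q_def abs_le_iff minus_le_iff)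
    moreover have "F (representation B x) = x"
      using B by (simp add: F_def sum_representation_eq)
    ultimately show "x \<in> F ` Q"
      by (metis image_eqI)
  qed
  moreover have "compact (F ` Q)"
    unfolding Q_def F_def
    by (intro compact_continuous_image compact_PiE_UNIV compact_Icc continuous_intros
        continuous_on_subset[OF continuous_on_product_coordinates subset_UNIV])
  ultimately have "compact (F ` Q \<inter> S)"
    using assms(4) by (intro compact_Int_closed)
  then show ?thesis
    using \<open>S \<subseteq> F ` Q\<close> by (simp add: Int_absorb1)
qed

lemma finite_span_compact_sphere:
  fixes V :: "'a::real_normed_vector set" and a :: 'a
  assumes "finite V" "span V = UNIV"
  shows "compact (sphere a r)"
proof (rule finite_span_bounded_closed_imp_compact[OF assms])
  show "bounded (sphere a r)"
    using bounded_cball sphere_cball by (rule bounded_subset)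
  show "closed (sphere a r)"
    unfolding cball_diff_eq_sphere[symmetric] by (intro closed_Diff closed_cball open_ball)
qed

lemma finite_span_dual:
  fixes V :: "'a::real_normed_vector set"
  assumes "finite V" "span V = UNIV"
  obtains D :: "('a \<Rightarrow>\<^sub>L real) set" where "finite D" "span D = UNIV"
proof -
  obtain B :: "'a set" and C :: real where B: "finite B" "independent B" "span B = UNIV"
    and coord: "\<And>x v. \<bar>representation B x v\<bar> \<le> C * norm x"
    using finite_span_basis_coordinates_le_norm[OF assms] by metis
  define c where "c w = Blinfun (\<lambda>x. representation B x w)" for w
  have "bounded_linear (\<lambda>x. representation B x w)" for w
  proof (rule bounded_linear_intro[where K = C])
    fix x y :: 'a and a :: real
    show "representation B (x + y) w = representation B x w + representation B y w"
      using B by (simp add: representation_add)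
    show "representation B (a *\<^sub>R x) w = a *\<^sub>R representation B x w"
      using B by (simp add: representation_scale)
    show "norm (representation B x w) \<le> norm x * C"
      using coord[of x w] by (simp add: mult.commute)
  qed
  then have c_apply: "blinfun_apply (c w) x = representation B x w" for w x
    by (simp add: c_def bounded_linear_Blinfun_apply)
  have "f \<in> span (c ` B)" for f
  proof -
    have "f = (\<Sum>w\<in>B. f w *\<^sub>R c w)"
    proof (rule blinfun_eqI)
      fix x
      have "f x = f (\<Sum>w\<in>B. representation B x w *\<^sub>R w)"
        using B by (simp add: sum_representation_eq)
      also have "\<dots> = (\<Sum>w\<in>B. f w *\<^sub>R c w) x"
        by (simp add: blinfun.sum_right blinfun.scaleR_right blinfun.sum_left blinfun.scaleR_left
            c_apply mult.commute)
      finally show "f x = (\<Sum>w\<in>B. f w *\<^sub>R c w) x" .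
    qed
    also have "\<dots> \<in> span (c ` B)"
      by (intro span_sum span_scale span_base) auto
    finally show ?thesis .
  qed
  then show ?thesis
    using that B(1) by blast
qed

lemma compact_supporting_triples:
  fixes V :: "'a::real_normed_vector set"
  assumes "finite V" "span V = UNIV"
  shows "compact {(x, f, g). x \<in> sphere (0::'a) 1 \<and> f \<in> supp_funcs x \<and> g \<in> supp_funcs x}"
proof -
  obtain D :: "('a \<Rightarrow>\<^sub>L real) set" where "finite D" "span D = UNIV"
    using finite_span_dual assms by blast
  then have "compact (sphere (0::'a \<Rightarrow>\<^sub>L real) 1)"
    by (rule finite_span_compact_sphere)
  moreover have "compact (sphere (0::'a) 1)"
    using assms by (rule finite_span_compact_sphere)
  ultimately have "compact (sphere (0::'a) 1 \<times> sphere (0::'a \<Rightarrow>\<^sub>L real) 1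
      \<times> sphere (0::'a \<Rightarrow>\<^sub>L real) 1)"
    by (intro compact_Times)
  then have "compact ((sphere (0::'a) 1 \<times> sphere 0 1 \<times> sphere 0 1)
      \<inter> {p. blinfun_apply (fst (snd p)) (fst p) = (1::real)}
      \<inter> {p. blinfun_apply (snd (snd p)) (fst p) = (1::real)})"
    by (intro compact_Int_closed closed_Collect_eq continuous_intros)
  also have "(sphere (0::'a) 1 \<times> sphere 0 1 \<times> sphere 0 1)
      \<inter> {p. blinfun_apply (fst (snd p)) (fst p) = (1::real)}
      \<inter> {p. blinfun_apply (snd (snd p)) (fst p) = (1::real)}
      = {(x, f, g). x \<in> sphere (0::'a) 1 \<and> f \<in> supp_funcs x \<and> g \<in> supp_funcs x}"
    by (auto simp: supp_funcs_def)
  finally show ?thesis .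
qed

lemma diameter_supp_funcs_attains_max:
  fixes V :: "'a::real_normed_vector set"
  assumes "finite V" "span V = UNIV" "sphere (0::'a) 1 \<noteq> {}"
  obtains x0 :: 'a where "x0 \<in> sphere 0 1"
    "\<And>x :: 'a. x \<in> sphere 0 1 \<Longrightarrow> diameter (supp_funcs x) \<le> diameter (supp_funcs x0)"
proof -
  define K where "K = {(x, f, g). x \<in> sphere (0::'a) 1 \<and> f \<in> supp_funcs x \<and> g \<in> supp_funcs x}"
  have bounded_supp_funcs: "bounded (supp_funcs x)" for x :: 'a
    by (rule bounded_subset[OF bounded_cball[of 0 1]]) (auto simp: supp_funcs_def)
  show ?thesis
  proof (cases "K = {}")
    case True
    have "supp_funcs x = {}" if "x \<in> sphere 0 1" for x :: 'a
    proof -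
      have "(x, f, f) \<notin> K" for f
        using True by simp
      then show ?thesis
        using that by (auto simp: K_def)
    qed
    then show ?thesis
      using that assms(3) by fastforce
  next
    case False
    have "continuous_on K (\<lambda>p. dist (fst (snd p)) (snd (snd p)))"
      by (intro continuous_intros)
    then obtain p0 where "p0 \<in> K"
      and p0_max: "\<And>p. p \<in> K
        \<Longrightarrow> dist (fst (snd p)) (snd (snd p)) \<le> dist (fst (snd p0)) (snd (snd p0))"
      using continuous_attains_sup[OF compact_supporting_triples[OF assms(1,2), folded K_def] False]
      by blast
    obtain x0 f0 g0 where "p0 = (x0, f0, g0)"
      by (cases p0)
    then have max: "(x0, f0, g0) \<in> K" "\<And>x f g. (x, f, g) \<in> K \<Longrightarrow> dist f g \<le> dist f0 g0"
      using \<open>p0 \<in> K\<close> p0_max by fastforce+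
    have "diameter (supp_funcs x) \<le> diameter (supp_funcs x0)" if "x \<in> sphere 0 1" for x :: 'a
    proof -
      have "diameter (supp_funcs x) \<le> dist f0 g0"
        using max(2) that by (intro diameter_le) (auto simp: K_def dist_norm)
      also have "\<dots> \<le> diameter (supp_funcs x0)"
        using max(1) by (intro diameter_bounded_bound bounded_supp_funcs) (auto simp: K_def)
      finally show ?thesis .
    qed
    then show ?thesis
      using that max(1) by (auto simp: K_def)
  qed
qed

theorem theorem2p6:
  fixes X_witness :: "'a::banach itself"
  assumes fin_dim: "\<exists>B :: 'a set. finite B \<and> span B = UNIV"
    and pointwise: "\<forall>x::'a \<in> sphere 0 1. \<exists>e. 0 \<le> e \<and> e < 2 \<and> eps_smooth e x"
  shows "\<exists>e. 0 \<le> e \<and> e < 2 \<and> (\<forall>x::'a \<in> sphere 0 1. eps_smooth e x)"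
proof (cases "sphere (0::'a) 1 = {}")
  case True
  then show ?thesis
    by (intro exI[of _ 0]) auto
next
  case False
  obtain x0 :: 'a where "x0 \<in> sphere 0 1"
    and max: "\<And>x :: 'a. x \<in> sphere 0 1 \<Longrightarrow> diameter (supp_funcs x) \<le> diameter (supp_funcs x0)"
    using fin_dim False diameter_supp_funcs_attains_max by blast
  then obtain e where "0 \<le> e" "e < 2" "eps_smooth e x0"
    using pointwise by blast
  then have "eps_smooth e x" if "x \<in> sphere 0 1" for x :: 'a
    using max[OF that] that by (auto simp: eps_smooth_def)
  then show ?thesis
    using \<open>0 \<le> e\<close> \<open>e < 2\<close> by blast
qed

end
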